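(* Let $\gamma,\delta>0$, let $x=(x_{ij}),y=(y_{ij})\in MS(2,\mathbb{R})$ (so $x_{21}=x_{12}$, $y_{21}=y_{12}$) with $y$ positive definite, $D:=y_{11}y_{22}-y_{12}^2$, and $p=(p_1,p_2)$, $q=(q_1,q_2)\in\mathbb{R}^2$. Let $F=(f_{ij})_{i,j=1}^5$ be the real symmetric matrix ($f_{ji}=f_{ij}$) with $f_{11}=\frac{\gamma}{D}y_{22}+\delta p_1^2$, $f_{12}=-\frac{\gamma}{D}y_{12}+\delta p_1p_2$, $f_{13}=\frac{\gamma}{D}(y_{22}x_{11}-y_{12}x_{12})-\delta q_1p_1$, $f_{14}=\frac{\gamma}{D}(y_{22}x_{12}-y_{12}x_{22})-\delta q_1p_2$, $f_{15}=-\delta p_1$, $f_{22}=\frac{\gamma}{D}y_{11}+\delta p_2^2$, $f_{23}=\frac{\gamma}{D}(-y_{12}x_{11}+y_{11}x_{12})-\delta q_2p_1$, $f_{24}=\frac{\gamma}{D}(-y_{12}x_{12}+y_{11}x_{22})-\delta q_2p_2$, $f_{25}=-\delta p_2$, $f_{33}=\frac{\gamma}{D}[(x_{11}^2+y_{11}^2)y_{22}+(x_{12}^2-y_{12}^2)y_{11}-2x_{11}x_{12}y_{12}]+\delta q_1^2$, $f_{34}=\frac{\gamma}{D}[(-x_{12}^2-x_{11}x_{22}+y_{11}y_{22}-y_{12}^2)y_{12}+x_{11}x_{12}y_{22}+x_{12}x_{22}y_{11}]+\delta q_1q_2$, $f_{35}=\delta q_1$, $f_{44}=\frac{\gamma}{D}[(x_{12}^2-y_{12}^2)y_{22}+(x_{22}^2+y_{22}^2)y_{11}-2x_{12}x_{22}y_{12}]+\delta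 q_2^2$, $f_{45}=\delta q_2$, $f_{55}=\delta$. Put $I_2:=p_2q_1-p_1q_2$, $A:=2[(x_{11}-x_{22})y_{12}-x_{12}(y_{11}-y_{22})]$ and $B:=4x_{12}^2+(x_{11}-x_{22})^2+y_{11}^2+y_{22}^2+2y_{12}^2$. Then $$ \det F=\delta\Big[\gamma^4-\gamma^3\frac{\delta I_2}{D}A-\gamma^2\frac{(\delta I_2)^2}{D}B-\gamma\frac{(\delta I_2)^3}{D}A+(\delta I_2)^4\Big]. $$
   Context: $MS(2,\mathbb{R})$ denotes real symmetric $2\times 2$ matrices. The matrix $F$ is the paper's $5\times 5$ matrix $g'_{\tilde{\mathcal{X}}^J_2}(x,y,q,p,\kappa)$ associated with the $(q,p,\kappa)$ coordinates of the extended Siegel–Jacobi upper half space of degree $2$; here it is defined directly by the listed entries. *)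

theory Defs
  imports "HOL-Analysis.Analysis"
begin

definition Fmat :: "real \<Rightarrow> real \<Rightarrow> real \<Rightarrow> real \<Rightarrow> real \<Rightarrow> real \<Rightarrow> real \<Rightarrow> real
     \<Rightarrow> real \<Rightarrow> real \<Rightarrow> real \<Rightarrow> real \<Rightarrow> real^5^5" where
  "Fmat \<gamma> \<delta> x11 x12 x22 y11 y12 y22 q1 q2 p1 p2 =
    (let D = y11 * y22 - y12^2;
         c = \<gamma> / D;
         f11 = c * y22 + \<delta> * p1^2;
         f12 = - c * y12 + \<delta> * p1 * p2;
         f13 = c * (y22 * x11 - y12 * x12) - \<delta> * q1 * p1;
         f14 = c * (y22 * x12 - y12 * x22) - \<delta> * q1 * p2;
         f15 = - \<delta> * p1;
         f22 = c * y11 + \<delta> * p2^2;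
         f23 = c * (- y12 * x11 + y11 * x12) - \<delta> * q2 * p1;
         f24 = c * (- y12 * x12 + y11 * x22) - \<delta> * q2 * p2;
         f25 = - \<delta> * p2;
         f33 = c * ((x11^2 + y11^2) * y22 + (x12^2 - y12^2) * y11 - 2 * x11 * x12 * y12) + \<delta> * q1^2;
         f34 = c * ((- (x12^2) - x11 * x22 + y11 * y22 - y12^2) * y12 + x11 * x12 * y22 + x12 * x22 * y11)
               + \<delta> * q1 * q2;
         f35 = \<delta> * q1;
         f44 = c * ((x12^2 - y12^2) * y22 + (x22^2 + y22^2) * y11 - 2 * x12 * x22 * y12) + \<delta> * q2^2;
         f45 = \<delta> * q2;
         f55 = \<delta>
     in vector [vector [f11, f12, f13, f14, f15],
                vector [f12, f22, f23, f24, f25],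
                vector [f13, f23, f33, f34, f35],
                vector [f14, f24, f34, f44, f45],
                vector [f15, f25, f35, f45, f55]])"

end

theory Submission
  imports Defs
begin

text \<open>With \<open>u = (-p\<^sub>1, -p\<^sub>2, q\<^sub>1, q\<^sub>2)\<close>, the last row and column of \<open>F\<close> are \<open>\<delta> (u, 1)\<close>, so
  \<open>det F = \<delta> det M\<close> for the Schur complement \<open>M = F\<^sub>4 - \<delta> u u\<^sup>T\<close> (\<open>F\<^sub>4\<close> the upper left
  \<open>4 \<times> 4\<close> block) of the corner entry \<open>f\<^sub>5\<^sub>5 = \<delta>\<close>. The cross terms \<open>\<delta> q\<^sub>i p\<^sub>j\<close> of \<open>F\<close> differ from those of \<open>\<delta> u u\<^sup>T\<close> only by
  \<open>\<plusminus>t\<close>, \<open>t = \<delta> I\<^sub>2\<close>, so \<open>M = c G + t J\<close> with \<open>c = \<gamma>/D\<close>, a matrix \<open>G\<close> depending only on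
  \<open>x, y\<close>, and the constant matrix \<open>J\<close> with \<open>J\<^sub>1\<^sub>4 = J\<^sub>4\<^sub>1 = -1\<close>, \<open>J\<^sub>2\<^sub>3 = J\<^sub>3\<^sub>2 = 1\<close>.
  Then \<open>det M\<close> is a polynomial identity in \<open>c, t, x, y\<close>, and substituting \<open>c = \<gamma>/D\<close> gives
  the formula.\<close>

lemma exhaust_5:
  fixes x :: 5
  shows "x = 1 \<or> x = 2 \<or> x = 3 \<or> x = 4 \<or> x = 5"
proof (induct x)
  case (of_int z)
  then have "z = 0 \<or> z = 1 \<or> z = 2 \<or> z = 3 \<or> z = 4" by fastforce
  then show ?case by auto
qed

lemma forall_5: "(\<forall>i::5. P i) \<longleftrightarrow> P 1 \<and> P 2 \<and> P 3 \<and> P 4 \<and> P 5"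
  by (metis exhaust_5)

lemma UNIV_5: "UNIV = {1, 2, 3, 4, 5::5}"
  using exhaust_5 by auto

lemma vector_4 [simp]:
  "(vector [x1, x2, x3, x4] :: ('a::zero)^4) $ 1 = x1"
  "(vector [x1, x2, x3, x4] :: ('a::zero)^4) $ 2 = x2"
  "(vector [x1, x2, x3, x4] :: ('a::zero)^4) $ 3 = x3"
  "(vector [x1, x2, x3, x4] :: ('a::zero)^4) $ 4 = x4"
  unfolding vector_def by simp_all

lemma vector_5 [simp]:
  "(vector [x1, x2, x3, x4, x5] :: ('a::zero)^5) $ 1 = x1"
  "(vector [x1, x2, x3, x4, x5] :: ('a::zero)^5) $ 2 = x2"
  "(vector [x1, x2, x3, x4, x5] :: ('a::zero)^5) $ 3 = x3"
  "(vector [x1, x2, x3, x4, x5] :: ('a::zero)^5) $ 4 = x4"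
  "(vector [x1, x2, x3, x4, x5] :: ('a::zero)^5) $ 5 = x5"
  unfolding vector_def by simp_all

lemma det_4:
  "det (A::'a::comm_ring_1^4^4) =
    A$1$1 * A$2$2 * A$3$3 * A$4$4 - A$1$1 * A$2$2 * A$3$4 * A$4$3 -
    A$1$1 * A$2$3 * A$3$2 * A$4$4 + A$1$1 * A$2$3 * A$3$4 * A$4$2 +
    A$1$1 * A$2$4 * A$3$2 * A$4$3 - A$1$1 * A$2$4 * A$3$3 * A$4$2 -
    A$1$2 * A$2$1 * A$3$3 * A$4$4 + A$1$2 * A$2$1 * A$3$4 * A$4$3 +
    A$1$2 * A$2$3 * A$3$1 * A$4$4 - A$1$2 * A$2$3 * A$3$4 * A$4$1 -
    A$1$2 * A$2$4 * A$3$1 * A$4$3 + A$1$2 * A$2$4 * A$3$3 * A$4$1 +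
    A$1$3 * A$2$1 * A$3$2 * A$4$4 - A$1$3 * A$2$1 * A$3$4 * A$4$2 -
    A$1$3 * A$2$2 * A$3$1 * A$4$4 + A$1$3 * A$2$2 * A$3$4 * A$4$1 +
    A$1$3 * A$2$4 * A$3$1 * A$4$2 - A$1$3 * A$2$4 * A$3$2 * A$4$1 -
    A$1$4 * A$2$1 * A$3$2 * A$4$3 + A$1$4 * A$2$1 * A$3$3 * A$4$2 +
    A$1$4 * A$2$2 * A$3$1 * A$4$3 - A$1$4 * A$2$2 * A$3$3 * A$4$1 -
    A$1$4 * A$2$3 * A$3$1 * A$4$2 + A$1$4 * A$2$3 * A$3$2 * A$4$1"
proof -
  have "finite {2::4, 3, 4}" "1 \<notin> {2::4, 3, 4}" "finite {3::4, 4}" "2 \<notin> {3::4, 4}"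
    "finite {4::4}" "3 \<notin> {4::4}"
    by auto
  note permutes_insert = sum_over_permutations_insert[OF this(1-2)]
    sum_over_permutations_insert[OF this(3-4)] sum_over_permutations_insert[OF this(5-6)]
  show ?thesis
    unfolding det_def UNIV_4 permutes_insert permutes_sing
    by (simp add: sign_swap_id permutation_swap_id sign_compose permutation_compose swap_id_eq
        algebra_simps)
qed

lemma det_rank_one_bordered:
  fixes m11 m12 m13 m14 m21 m22 m23 m24 m31 m32 m33 m34 m41 m42 m43 m44
    u1 u2 u3 u4 v1 v2 v3 v4 d :: "'a::comm_ring_1"
  shows "det (vector [
      vector [m11 + d * u1 * v1, m12 + d * u1 * v2, m13 + d * u1 * v3, m14 + d * u1 * v4, d * u1],
      vector [m21 + d * u2 * v1, m22 + d * u2 * v2, m23 + d * u2 * v3, m24 + d * u2 * v4, d * u2],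
      vector [m31 + d * u3 * v1, m32 + d * u3 * v2, m33 + d * u3 * v3, m34 + d * u3 * v4, d * u3],
      vector [m41 + d * u4 * v1, m42 + d * u4 * v2, m43 + d * u4 * v3, m44 + d * u4 * v4, d * u4],
      vector [d * v1, d * v2, d * v3, d * v4, d]] :: 'a^5^5)
    = d * det (vector [
      vector [m11, m12, m13, m14],
      vector [m21, m22, m23, m24],
      vector [m31, m32, m33, m34],
      vector [m41, m42, m43, m44]] :: 'a^4^4)"
proof -
  have "finite {2::5, 3, 4, 5}" "1 \<notin> {2::5, 3, 4, 5}" "finite {3::5, 4, 5}" "2 \<notin> {3::5, 4, 5}"
    "finite {4::5, 5}" "3 \<notin> {4::5, 5}" "finite {5::5}" "4 \<notin> {5::5}"
    by auto
  note permutes_insert = sum_over_permutations_insert[OF this(1-2)]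
    sum_over_permutations_insert[OF this(3-4)] sum_over_permutations_insert[OF this(5-6)]
    sum_over_permutations_insert[OF this(7-8)]
  show ?thesis
    unfolding det_def[of "_ :: 'a^5^5"] UNIV_5 permutes_insert permutes_sing det_4
    by (simp add: sign_swap_id permutation_swap_id sign_compose permutation_compose swap_id_eq
        algebra_simps)
qed

definition Fmat_schur_complement ::
    "'a::comm_ring_1 \<Rightarrow> 'a \<Rightarrow> 'a \<Rightarrow> 'a \<Rightarrow> 'a \<Rightarrow> 'a \<Rightarrow> 'a \<Rightarrow> 'a \<Rightarrow> 'a^4^4" where
  "Fmat_schur_complement c t x11 x12 x22 y11 y12 y22 = vector [
      vector [c * y22, - c * y12, c * (y22 * x11 - y12 * x12), c * (y22 * x12 - y12 * x22) - t],
      vector [- c * y12, c * y11, c * (y11 * x12 - y12 * x11) + t, c * (y11 * x22 - y12 * x12)],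
      vector [c * (y22 * x11 - y12 * x12), c * (y11 * x12 - y12 * x11) + t,
        c * ((x11^2 + y11^2) * y22 + (x12^2 - y12^2) * y11 - 2 * x11 * x12 * y12),
        c * ((y11 * y22 - y12^2 - x12^2 - x11 * x22) * y12 + x11 * x12 * y22 + x12 * x22 * y11)],
      vector [c * (y22 * x12 - y12 * x22) - t, c * (y11 * x22 - y12 * x12),
        c * ((y11 * y22 - y12^2 - x12^2 - x11 * x22) * y12 + x11 * x12 * y22 + x12 * x22 * y11),
        c * ((x12^2 - y12^2) * y22 + (x22^2 + y22^2) * y11 - 2 * x12 * x22 * y12)]]"

lemma det_Fmat_eq_schur_complement:
  "det (Fmat \<gamma> \<delta> x11 x12 x22 y11 y12 y22 q1 q2 p1 p2) =
    \<delta> * det (Fmat_schur_complement (\<gamma> / (y11 * y22 - y12^2)) (\<delta> * (p2 * q1 - p1 * q2))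
      x11 x12 x22 y11 y12 y22)"
  unfolding Fmat_schur_complement_def
  by (rule trans[OF arg_cong[where f = det] det_rank_one_bordered[where
        ?u1.0 = "- p1" and ?u2.0 = "- p2" and ?u3.0 = q1 and ?u4.0 = q2 and
        ?v1.0 = "- p1" and ?v2.0 = "- p2" and ?v3.0 = q1 and ?v4.0 = q2]])
    (simp add: Fmat_def Let_def vec_eq_iff forall_5 algebra_simps power2_eq_square
      diff_divide_distrib add_divide_distrib)

lemma det_Fmat_schur_complement:
  fixes c t x11 x12 x22 y11 y12 y22 :: "'a::comm_ring_1"
  defines "D \<equiv> y11 * y22 - y12^2"
    and "A \<equiv> 2 * ((x11 - x22) * y12 - x12 * (y11 - y22))"
    and "B \<equiv> 4 * x12^2 + (x11 - x22)^2 + y11^2 + y22^2 + 2 * y12^2"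
  shows "det (Fmat_schur_complement c t x11 x12 x22 y11 y12 y22)
    = c^4 * D^4 - c^3 * D^2 * t * A - c^2 * D * t^2 * B - c * t^3 * A + t^4"
  unfolding Fmat_schur_complement_def det_4 D_def A_def B_def
  by (simp add: algebra_simps power2_eq_square power4_eq_xxxx power3_eq_cube)

theorem mainTheorem3:
  fixes \<gamma> \<delta> x11 x12 x22 y11 y12 y22 q1 q2 p1 p2 :: real
  assumes "\<gamma> > 0" and "\<delta> > 0"
    and "y11 > 0" and "y11 * y22 - y12^2 > 0"
  shows "let D = y11 * y22 - y12^2;
             I2 = p2 * q1 - p1 * q2;
             A = 2 * ((x11 - x22) * y12 - x12 * (y11 - y22));
             B = 4 * x12^2 + (x11 - x22)^2 + y11^2 + y22^2 + 2 * y12^2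
         in det (Fmat \<gamma> \<delta> x11 x12 x22 y11 y12 y22 q1 q2 p1 p2) =
            \<delta> * (\<gamma>^4 - \<gamma>^3 * (\<delta> * I2) / D * A - \<gamma>^2 * (\<delta> * I2)^2 / D * B
                 - \<gamma> * (\<delta> * I2)^3 / D * A + (\<delta> * I2)^4)"
proof -
  define D where "D = y11 * y22 - y12^2"
  define A where "A = 2 * ((x11 - x22) * y12 - x12 * (y11 - y22))"
  define B where "B = 4 * x12^2 + (x11 - x22)^2 + y11^2 + y22^2 + 2 * y12^2"
  define t where "t = \<delta> * (p2 * q1 - p1 * q2)"
  have "D \<noteq> 0"
    using assms(4) by (simp add: D_def)
  have "det (Fmat \<gamma> \<delta> x11 x12 x22 y11 y12 y22 q1 q2 p1 p2)
      = \<delta> * ((\<gamma> / D)^4 * D^4 - (\<gamma> / D)^3 * D^2 * t * A - (\<gamma> / D)^2 * D * t^2 * B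
          - (\<gamma> / D) * t^3 * A + t^4)"
    unfolding det_Fmat_eq_schur_complement det_Fmat_schur_complement D_def A_def B_def t_def ..
  then show ?thesis
    using \<open>D \<noteq> 0\<close> unfolding Let_def D_def [symmetric] A_def [symmetric] B_def [symmetric]
      t_def [symmetric]
    by (simp add: field_simps power2_eq_square power3_eq_cube power4_eq_xxxx)
qed

end
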